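(* Let $A\in\mathbb{C}^{m\times n}$ have rank $r$, $B\in\mathbb{C}^{m\times n}$ have rank $s$, and $E=B-A$. Then $$\|B^{\dagger}-A^{\dagger}\|_{F}^{2}\leq\min\big\{\delta_{1}+\|B^{\dagger}EA^{\dagger}\|_{F}^{2},\ \delta_{2}+\|A^{\dagger}EB^{\dagger}\|_{F}^{2}\big\},$$ where $$\delta_{1}:=\max\big\{\|A^{\dagger}\|_{2}^{4},\|B^{\dagger}\|_{2}^{4}\big\}\Big(\|E\|_{F}^{2}-\max\Big\{\frac{\|AA^{\dagger}EB^{\dagger}\|_{F}^{2}}{\|B^{\dagger}\|_{2}^{2}},\frac{\|A^{\dagger}EB^{\dagger}B\|_{F}^{2}}{\|A^{\dagger}\|_{2}^{2}}\Big\}\Big),$$ $$\delta_{2}:=\max\big\{\|A^{\dagger}\|_{2}^{4},\|B^{\dagger}\|_{2}^{4}\big\}\Big(\|E\|_{F}^{2}-\max\Big\{\frac{\|BB^{\dagger}EA^{\dagger}\|_{F}^{2}}{\|A^{\dagger}\|_{2}^{2}},\frac{\|B^{\dagger}EA^{\dagger}A\|_{F}^{2}}{\|B^{\dagger}\|_{2}^{2}}\Big\}\Big).$$ In particular, if $s=r$, then $$\|B^{\dagger}-A^{\dagger}\|_{F}^{2}\leq\min\big\{\varepsilon_{1}+\|B^{\dagger}EA^{\dagger}\|_{F}^{2},\ \varepsilon_{2}+\|A^{\dagger}EB^{\dagger}\|_{F}^{2}\big\},$$ where $$\varepsilon_{1}:=\|A^{\dagger}\|_{2}^{2}\|B^{\dagger}\|_{2}^{2}\Big(\|E\|_{F}^{2}-\max\Big\{\frac{\|BB^{\dagger}EA^{\dagger}\|_{F}^{2}}{\|A^{\dagger}\|_{2}^{2}},\frac{\|B^{\dagger}EA^{\dagger}A\|_{F}^{2}}{\|B^{\dagger}\|_{2}^{2}}\Big\}\Big),$$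 $$\varepsilon_{2}:=\|A^{\dagger}\|_{2}^{2}\|B^{\dagger}\|_{2}^{2}\Big(\|E\|_{F}^{2}-\max\Big\{\frac{\|AA^{\dagger}EB^{\dagger}\|_{F}^{2}}{\|B^{\dagger}\|_{2}^{2}},\frac{\|A^{\dagger}EB^{\dagger}B\|_{F}^{2}}{\|A^{\dagger}\|_{2}^{2}}\Big\}\Big).$$
   Context: $M^{\dagger}$ denotes the Moore–Penrose inverse of $M$, $\|\cdot\|_{2}$ the spectral norm and $\|\cdot\|_{F}$ the Frobenius norm. *)

theory Defs
  imports "Jordan_Normal_Form.Schur_Decomposition" "Jordan_Normal_Form.DL_Rank"
begin

definition is_moore_penrose :: "complex mat \<Rightarrow> complex mat \<Rightarrow> bool" where
  "is_moore_penrose A X \<longleftrightarrow>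
     X \<in> carrier_mat (dim_col A) (dim_row A) \<and>
     A * X * A = A \<and> X * A * X = X \<and>
     mat_adjoint (A * X) = A * X \<and> mat_adjoint (X * A) = X * A"

definition pinv :: "complex mat \<Rightarrow> complex mat" where
  "pinv A = (THE X. is_moore_penrose A X)"

definition vnorm2 :: "complex vec \<Rightarrow> real" where
  "vnorm2 v = sqrt (\<Sum>i<dim_vec v. (cmod (v $ i))\<^sup>2)"

definition fro_norm :: "complex mat \<Rightarrow> real" where
  "fro_norm A = sqrt (\<Sum>i<dim_row A. \<Sum>j<dim_col A. (cmod (A $$ (i, j)))\<^sup>2)"

definition spec_norm :: "complex mat \<Rightarrow> real" where
  "spec_norm A = Sup {vnorm2 (A *\<^sub>v x) | x. x \<in> carrier_vec (dim_col A) \<and> vnorm2 x \<le> 1}"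

definition crank :: "complex mat \<Rightarrow> nat" where
  "crank A = vec_space.rank (dim_row A) A"

end

theory Submission
  imports Defs
begin

text \<open>
  Put \<open>P = A A\<^sup>\<dagger>\<close>, \<open>Q = B\<^sup>\<dagger> B\<close> and \<open>R = B B\<^sup>\<dagger>\<close>. Since \<open>Q B\<^sup>\<dagger> = B\<^sup>\<dagger>\<close> and \<open>A\<^sup>\<dagger> P = A\<^sup>\<dagger>\<close>,
  cutting \<open>B\<^sup>\<dagger> - A\<^sup>\<dagger>\<close> with \<open>Q\<close> on the left and \<open>P\<close> on the right gives three mutually
  orthogonal pieces: \<open>\<parallel>B\<^sup>\<dagger> - A\<^sup>\<dagger>\<parallel>\<^sup>2 = \<parallel>B\<^sup>\<dagger> E A\<^sup>\<dagger>\<parallel>\<^sup>2 + \<parallel>B\<^sup>\<dagger> (I - P)\<parallel>\<^sup>2 + \<parallel>(I - Q) A\<^sup>\<dagger>\<parallel>\<^sup>2\<close>.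
  The last two pieces are bounded by the off-diagonal blocks \<open>(I - P) E Q\<close> and
  \<open>P E (I - Q)\<close> of \<open>E\<close>, whose squared norms add up to \<open>\<parallel>E\<parallel>\<^sup>2 - \<parallel>P E Q\<parallel>\<^sup>2\<close> because the
  block \<open>(I - P) E (I - Q)\<close> vanishes; and \<open>\<parallel>P E Q\<parallel>\<^sup>2\<close> dominates both quotients in the maximum.
  When the ranks agree, \<open>P\<close> and \<open>R\<close> have equal traces, so \<open>\<parallel>R (I - P)\<parallel> = \<parallel>(I - R) P\<parallel>\<close>;
  bounding \<open>B\<^sup>\<dagger> (I - P) = B\<^sup>\<dagger> R (I - P)\<close> through this identity (and symmetrically on the
  other side) gives the constant \<open>\<parallel>A\<^sup>\<dagger>\<parallel>\<^sub>2\<^sup>2 \<parallel>B\<^sup>\<dagger>\<parallel>\<^sub>2\<^sup>2\<close> instead of a fourth power.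
\<close>

lemma mat_adjoint_eq: "mat_adjoint A = mat (dim_col A) (dim_row A) (\<lambda>(i,j). cnj (A $$ (j,i)))"
  unfolding mat_adjoint_def mat_of_rows_def
  by (rule eq_matI) simp_all

lemma dim_mat_adjoint [simp]:
  "dim_row (mat_adjoint (A::complex mat)) = dim_col A"
  "dim_col (mat_adjoint A) = dim_row A"
  by (simp_all add: mat_adjoint_eq)

lemma index_mat_adjoint [simp]:
  "i < dim_col A \<Longrightarrow> j < dim_row A \<Longrightarrow> mat_adjoint (A::complex mat) $$ (i,j) = cnj (A $$ (j,i))"
  by (simp add: mat_adjoint_eq)

lemma mat_adjoint_carrier [simp]: "A \<in> carrier_mat n k \<Longrightarrow> mat_adjoint (A::complex mat) \<in> carrier_mat k n"
  by auto

lemma mat_adjoint_adjoint [simp]: "mat_adjoint (mat_adjoint (A::complex mat)) = A"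
  by (rule eq_matI) simp_all

lemma mat_adjoint_mult:
  "dim_col A = dim_row B \<Longrightarrow> mat_adjoint (A * B) = mat_adjoint B * mat_adjoint (A::complex mat)"
  by (intro eq_matI) (auto simp: scalar_prod_def sum_conjugate intro!: sum.cong)

lemma mat_adjoint_add:
  "dim_row A = dim_row B \<Longrightarrow> dim_col A = dim_col B \<Longrightarrow>
   mat_adjoint (A + B) = mat_adjoint A + mat_adjoint (B::complex mat)"
  by (intro eq_matI) auto

lemma mat_adjoint_minus:
  "dim_row A = dim_row B \<Longrightarrow> dim_col A = dim_col B \<Longrightarrow>
   mat_adjoint (A - B) = mat_adjoint A - mat_adjoint (B::complex mat)"
  by (intro eq_matI) auto

lemma mat_adjoint_one [simp]: "mat_adjoint (1\<^sub>m n :: complex mat) = 1\<^sub>m n"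
  by (intro eq_matI) auto

lemma mat_adjoint_uminus [simp]: "mat_adjoint (- A :: complex mat) = - mat_adjoint A"
  by (intro eq_matI) auto

lemma mat_adjoint_zero [simp]: "mat_adjoint (0\<^sub>m n k :: complex mat) = 0\<^sub>m k n"
  by (intro eq_matI) auto

lemma assoc_mult_mat':
  "dim_col A = dim_row B \<Longrightarrow> dim_col B = dim_row C \<Longrightarrow> A * B * C = A * (B * (C::'a::semiring_0 mat))"
  by (rule assoc_mult_mat[of A "dim_row A" "dim_col A" B "dim_col B" C "dim_col C"]) auto

lemma minus_mult_distrib_mat':
  "dim_row A = dim_row B \<Longrightarrow> dim_col A = dim_col B \<Longrightarrow> dim_col B = dim_row C \<Longrightarrow>
   (A - B) * C = A * C - B * (C::'a::ring mat)"
  by (rule minus_mult_distrib_mat[of A "dim_row B" "dim_col B" B C "dim_col C"]) auto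

lemma mult_minus_distrib_mat':
  "dim_col A = dim_row B \<Longrightarrow> dim_row B = dim_row C \<Longrightarrow> dim_col B = dim_col C \<Longrightarrow>
   A * (B - C) = A * B - A * (C::'a::ring mat)"
  by (rule mult_minus_distrib_mat[of A "dim_row A" "dim_col A" B "dim_col C" C]) auto

lemma minus_self_mat: "A - A = 0\<^sub>m (dim_row A) (dim_col (A::'a::ab_group_add mat))"
  by (intro eq_matI) auto

lemma minus_zero_mat:
  "dim_row A = n \<Longrightarrow> dim_col A = k \<Longrightarrow> A - 0\<^sub>m n k = (A::'a::ab_group_add mat)"
  by (intro eq_matI) auto

lemma zero_minus_mat:
  "dim_row A = n \<Longrightarrow> dim_col A = k \<Longrightarrow> 0\<^sub>m n k - A = - (A::'a::ab_group_add mat)"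
  by (intro eq_matI) auto

lemma minus_mat_swap:
  "dim_row A = dim_row B \<Longrightarrow> dim_col A = dim_col B \<Longrightarrow> A - B = - (B - (A::'a::ab_group_add mat))"
  by (intro eq_matI) auto

definition trace :: "complex mat \<Rightarrow> complex" where
  "trace A = (\<Sum>i<dim_row A. A $$ (i,i))"

lemma trace_zero [simp]: "trace (0\<^sub>m n n) = 0"
  by (simp add: trace_def)

lemma trace_one [simp]: "trace (1\<^sub>m n) = of_nat n"
  by (simp add: trace_def)

lemma trace_add:
  "A \<in> carrier_mat n n \<Longrightarrow> B \<in> carrier_mat n n \<Longrightarrow> trace (A + B) = trace A + trace B"
  by (auto simp: trace_def sum.distrib)

lemma trace_minus:
  "A \<in> carrier_mat n n \<Longrightarrow> B \<in> carrier_mat n n \<Longrightarrow> trace (A - B) = trace A - trace B"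
  by (auto simp: trace_def sum_subtractf)

lemma trace_mult_comm:
  assumes "A \<in> carrier_mat n k" "B \<in> carrier_mat k n"
  shows "trace (A * B) = trace (B * A)"
proof -
  have "trace (A * B) = (\<Sum>i<n. \<Sum>j<k. A $$ (i,j) * B $$ (j,i))"
    using assms by (auto simp: trace_def scalar_prod_def atLeast0LessThan)
  also have "\<dots> = (\<Sum>j<k. \<Sum>i<n. B $$ (j,i) * A $$ (i,j))"
    by (subst sum.swap) (simp add: mult.commute)
  also have "\<dots> = trace (B * A)"
    using assms by (auto simp: trace_def scalar_prod_def atLeast0LessThan)
  finally show ?thesis .
qed

section \<open>Frobenius norm, Euclidean norm and spectral norm\<close>

lemma fro_norm_nonneg: "fro_norm A \<ge> 0"
  unfolding fro_norm_def by (intro real_sqrt_ge_zero sum_nonneg) simp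

lemma power2_fro_norm: "(fro_norm A)\<^sup>2 = (\<Sum>i<dim_row A. \<Sum>j<dim_col A. (cmod (A $$ (i, j)))\<^sup>2)"
  unfolding fro_norm_def by (simp add: sum_nonneg)

lemma fro_norm_adjoint [simp]: "fro_norm (mat_adjoint A) = fro_norm A"
  unfolding fro_norm_def by (subst sum.swap) simp

lemma fro_norm_uminus [simp]: "fro_norm (- A) = fro_norm A"
  unfolding fro_norm_def by simp

lemma trace_adjoint_mult_self: "trace (mat_adjoint A * A) = complex_of_real ((fro_norm A)\<^sup>2)"
proof -
  have "trace (mat_adjoint A * A) = (\<Sum>j<dim_col A. \<Sum>i<dim_row A. cnj (A $$ (i,j)) * A $$ (i,j))"
    by (auto simp: trace_def scalar_prod_def atLeast0LessThan)
  also have "\<dots> = (\<Sum>j<dim_col A. \<Sum>i<dim_row A. complex_of_real ((cmod (A $$ (i,j)))\<^sup>2))"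
    by (intro sum.cong refl) (metis complex_norm_square mult.commute of_real_power)
  also have "\<dots> = complex_of_real ((fro_norm A)\<^sup>2)"
    unfolding power2_fro_norm by (subst sum.swap) simp
  finally show ?thesis .
qed

lemma fro_norm_add_orthogonal:
  assumes X: "X \<in> carrier_mat k l" and Y: "Y \<in> carrier_mat k l"
    and orth: "mat_adjoint X * Y = 0\<^sub>m l l"
  shows "(fro_norm (X + Y))\<^sup>2 = (fro_norm X)\<^sup>2 + (fro_norm Y)\<^sup>2"
proof -
  have orth': "mat_adjoint Y * X = 0\<^sub>m l l"
    using arg_cong[OF orth, of mat_adjoint] X Y by (simp add: mat_adjoint_mult)
  have "complex_of_real ((fro_norm (X + Y))\<^sup>2) = trace (mat_adjoint (X + Y) * (X + Y))"
    by (simp add: trace_adjoint_mult_self)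
  also have "\<dots> = trace (mat_adjoint X * X + mat_adjoint Y * X + (mat_adjoint X * Y + mat_adjoint Y * Y))"
    using X Y by (simp add: mat_adjoint_add add_mult_distrib_mat[of _ l k] mult_add_distrib_mat[of _ l k])
  also have "\<dots> = trace (mat_adjoint X * X) + trace (mat_adjoint Y * Y)"
    using X Y orth orth' by (subst trace_add[of _ l], (auto)[2])+ simp
  also have "\<dots> = complex_of_real ((fro_norm X)\<^sup>2 + (fro_norm Y)\<^sup>2)"
    by (simp add: trace_adjoint_mult_self)
  finally show ?thesis using of_real_eq_iff by blast
qed

lemma vnorm2_nonneg: "vnorm2 v \<ge> 0"
  unfolding vnorm2_def by (intro real_sqrt_ge_zero sum_nonneg) simp

lemma power2_vnorm2: "(vnorm2 v)\<^sup>2 = (\<Sum>i<dim_vec v. (cmod (v $ i))\<^sup>2)"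
  unfolding vnorm2_def by (simp add: sum_nonneg)

lemma vnorm2_smult: "vnorm2 (c \<cdot>\<^sub>v v) = cmod c * vnorm2 v"
  unfolding vnorm2_def
  by (simp add: norm_mult power_mult_distrib real_sqrt_mult flip: sum_distrib_left)

lemma power2_fro_norm_cols: "(fro_norm Z)\<^sup>2 = (\<Sum>j<dim_col Z. (vnorm2 (col Z j))\<^sup>2)"
  unfolding power2_fro_norm power2_vnorm2 by (subst sum.swap) simp

lemma Cauchy_Schwarz_real_sum:
  fixes a b :: "'i \<Rightarrow> real"
  shows "(\<Sum>i\<in>I. a i * b i)\<^sup>2 \<le> (\<Sum>i\<in>I. (a i)\<^sup>2) * (\<Sum>i\<in>I. (b i)\<^sup>2)"
proof (cases "finite I")
  case fin: True
  define S where "S = (\<Sum>i\<in>I. (a i)\<^sup>2)"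
  define T where "T = (\<Sum>i\<in>I. (b i)\<^sup>2)"
  define P where "P = (\<Sum>i\<in>I. a i * b i)"
  show ?thesis
  proof (cases "T = 0")
    case True
    then have "\<forall>i\<in>I. (b i)\<^sup>2 = 0" using fin unfolding T_def
      by (subst sum_nonneg_eq_0_iff[symmetric]) auto
    then have "P = 0" unfolding P_def by simp
    then show ?thesis unfolding P_def[symmetric] S_def[symmetric] T_def[symmetric] using True by simp
  next
    case False
    have T0: "T > 0" using False unfolding T_def by (metis less_eq_real_def sum_nonneg zero_le_power2)
    have "0 \<le> (\<Sum>i\<in>I. (a i * T - b i * P)\<^sup>2)" by (simp add: sum_nonneg)
    also have "\<dots> = (\<Sum>i\<in>I. T\<^sup>2 * (a i)\<^sup>2 - 2 * T * P * (a i * b i) + P\<^sup>2 * (b i)\<^sup>2)"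
      by (rule sum.cong) (simp_all add: power2_eq_square algebra_simps)
    also have "\<dots> = T\<^sup>2 * S - 2 * T * P * P + P\<^sup>2 * T"
      unfolding sum.distrib sum_subtractf sum_distrib_left[symmetric] S_def[symmetric] T_def[symmetric] P_def[symmetric]
      by simp
    also have "\<dots> = T * (S * T - P\<^sup>2)" by (simp add: power2_eq_square algebra_simps)
    finally have "0 \<le> S * T - P\<^sup>2" using T0 by (simp add: zero_le_mult_iff)
    then show ?thesis unfolding P_def[symmetric] S_def[symmetric] T_def[symmetric] by simp
  qed
qed simp

lemma Cauchy_Schwarz_complex_sum:
  fixes a b :: "'i \<Rightarrow> complex"
  shows "cmod (\<Sum>i\<in>I. a i * b i) \<le> sqrt (\<Sum>i\<in>I. (cmod (a i))\<^sup>2) * sqrt (\<Sum>i\<in>I. (cmod (b i))\<^sup>2)"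
proof -
  have "cmod (\<Sum>i\<in>I. a i * b i) \<le> (\<Sum>i\<in>I. cmod (a i) * cmod (b i))"
    by (metis (no_types, lifting) norm_mult norm_sum sum.cong)
  also have "\<dots> \<le> sqrt ((\<Sum>i\<in>I. (cmod (a i))\<^sup>2) * (\<Sum>i\<in>I. (cmod (b i))\<^sup>2))"
    by (rule real_le_rsqrt) (rule Cauchy_Schwarz_real_sum)
  finally show ?thesis by (simp add: real_sqrt_mult)
qed

lemma vnorm2_mult_mat_vec_le_fro_norm:
  assumes v: "v \<in> carrier_vec (dim_col X)"
  shows "vnorm2 (X *\<^sub>v v) \<le> fro_norm X * vnorm2 v"
proof (rule power2_le_imp_le)
  have "(vnorm2 (X *\<^sub>v v))\<^sup>2 = (\<Sum>i<dim_row X. (cmod (\<Sum>j<dim_col X. X $$ (i,j) * v $ j))\<^sup>2)"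
    unfolding power2_vnorm2 using v by (simp add: scalar_prod_def atLeast0LessThan)
  also have "\<dots> \<le> (\<Sum>i<dim_row X. (\<Sum>j<dim_col X. (cmod (X $$ (i,j)))\<^sup>2) * (\<Sum>j<dim_col X. (cmod (v $ j))\<^sup>2))"
  proof (rule sum_mono)
    fix i
    have "(cmod (\<Sum>j<dim_col X. X $$ (i,j) * v $ j))\<^sup>2
      \<le> (sqrt (\<Sum>j<dim_col X. (cmod (X $$ (i,j)))\<^sup>2) * sqrt (\<Sum>j<dim_col X. (cmod (v $ j))\<^sup>2))\<^sup>2"
      by (intro power_mono Cauchy_Schwarz_complex_sum) simp
    then show "(cmod (\<Sum>j<dim_col X. X $$ (i,j) * v $ j))\<^sup>2
      \<le> (\<Sum>j<dim_col X. (cmod (X $$ (i,j)))\<^sup>2) * (\<Sum>j<dim_col X. (cmod (v $ j))\<^sup>2)"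
      by (simp add: power_mult_distrib sum_nonneg)
  qed
  also have "\<dots> = (fro_norm X * vnorm2 v)\<^sup>2"
    using v by (simp add: power_mult_distrib power2_fro_norm power2_vnorm2 sum_distrib_right)
  finally show "(vnorm2 (X *\<^sub>v v))\<^sup>2 \<le> (fro_norm X * vnorm2 v)\<^sup>2" .
qed (simp add: fro_norm_nonneg vnorm2_nonneg)

lemma bdd_above_spec_norm_set:
  "bdd_above {vnorm2 (A *\<^sub>v x) | x. x \<in> carrier_vec (dim_col A) \<and> vnorm2 x \<le> 1}"
proof (rule bdd_aboveI, clarify)
  fix x :: "complex vec"
  assume x: "x \<in> carrier_vec (dim_col A)" "vnorm2 x \<le> 1"
  have "vnorm2 (A *\<^sub>v x) \<le> fro_norm A * vnorm2 x"
    using x(1) by (rule vnorm2_mult_mat_vec_le_fro_norm)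
  also have "\<dots> \<le> fro_norm A"
    using x(2) fro_norm_nonneg mult_left_le by blast
  finally show "vnorm2 (A *\<^sub>v x) \<le> fro_norm A" .
qed

lemma vnorm2_le_spec_norm:
  assumes "x \<in> carrier_vec (dim_col A)" "vnorm2 x \<le> 1"
  shows "vnorm2 (A *\<^sub>v x) \<le> spec_norm A"
  unfolding spec_norm_def using assms by (intro cSup_upper bdd_above_spec_norm_set) auto

lemma spec_norm_nonneg: "spec_norm A \<ge> 0"
proof -
  have "vnorm2 (0\<^sub>v (dim_col A)) = 0"
    unfolding vnorm2_def by simp
  moreover have "A *\<^sub>v 0\<^sub>v (dim_col A) = 0\<^sub>v (dim_row A)"
    by (intro eq_vecI) auto
  ultimately show ?thesis
    using vnorm2_le_spec_norm[of "0\<^sub>v (dim_col A)" A] by (simp add: vnorm2_def)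
qed

lemma vnorm2_mult_mat_vec_le:
  assumes v: "v \<in> carrier_vec (dim_col X)"
  shows "vnorm2 (X *\<^sub>v v) \<le> spec_norm X * vnorm2 v"
proof (cases "vnorm2 v = 0")
  case True
  then show ?thesis using vnorm2_mult_mat_vec_le_fro_norm[OF v] by simp
next
  case False
  then have pos: "vnorm2 v > 0" using vnorm2_nonneg[of v] by linarith
  define c where "c = complex_of_real (1 / vnorm2 v)"
  have cmod_c: "cmod c = 1 / vnorm2 v"
    unfolding c_def using pos by (simp add: norm_divide)
  have "vnorm2 (X *\<^sub>v (c \<cdot>\<^sub>v v)) \<le> spec_norm X"
    using v pos by (intro vnorm2_le_spec_norm) (auto simp: vnorm2_smult cmod_c)
  moreover have "X *\<^sub>v (c \<cdot>\<^sub>v v) = c \<cdot>\<^sub>v (X *\<^sub>v v)"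
    using v by (intro mult_mat_vec[of _ "dim_row X" "dim_col X"]) auto
  ultimately show ?thesis
    using pos by (simp add: vnorm2_smult cmod_c divide_le_eq mult.commute)
qed

lemma of_real_power2_vnorm2: "complex_of_real ((vnorm2 v)\<^sup>2) = (\<Sum>i<dim_vec v. v $ i * cnj (v $ i))"
  unfolding power2_vnorm2 of_real_sum complex_norm_square by simp

lemma vnorm2_eq_0_iff: "v \<in> carrier_vec n \<Longrightarrow> vnorm2 v = 0 \<longleftrightarrow> v = 0\<^sub>v n"
  unfolding vnorm2_def by (auto simp: sum_nonneg_eq_0_iff intro!: eq_vecI)

lemma sum_mult_mat_vec_cnj:
  assumes v: "v \<in> carrier_vec (dim_col M)" and w: "w \<in> carrier_vec (dim_row M)"
  shows "(\<Sum>i<dim_row M. (M *\<^sub>v v) $ i * cnj (w $ i))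
       = (\<Sum>j<dim_col M. v $ j * cnj ((mat_adjoint M *\<^sub>v w) $ j))"
proof -
  have "(\<Sum>i<dim_row M. (M *\<^sub>v v) $ i * cnj (w $ i))
      = (\<Sum>i<dim_row M. \<Sum>j<dim_col M. M $$ (i,j) * v $ j * cnj (w $ i))"
    using v by (simp add: scalar_prod_def atLeast0LessThan sum_distrib_right)
  also have "\<dots> = (\<Sum>j<dim_col M. \<Sum>i<dim_row M. M $$ (i,j) * v $ j * cnj (w $ i))"
    by (rule sum.swap)
  also have "\<dots> = (\<Sum>j<dim_col M. v $ j * cnj ((mat_adjoint M *\<^sub>v w) $ j))"
    using w by (simp add: scalar_prod_def atLeast0LessThan sum_distrib_left mult_ac)
  finally show ?thesis .
qed

text \<open>Via \<open>\<parallel>X\<^sup>* v\<parallel>\<^sup>2 = \<langle>X X\<^sup>* v, v\<rangle> \<le> \<parallel>X\<parallel>\<^sub>2 \<parallel>X\<^sup>* v\<parallel> \<parallel>v\<parallel>\<close>.\<close>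
lemma vnorm2_adjoint_mult_mat_vec_le:
  assumes v: "v \<in> carrier_vec (dim_row X)"
  shows "vnorm2 (mat_adjoint X *\<^sub>v v) \<le> spec_norm X * vnorm2 v"
proof -
  define w where "w = mat_adjoint X *\<^sub>v v"
  have w: "w \<in> carrier_vec (dim_col X)"
    unfolding w_def by (rule carrier_vecI) simp
  have "complex_of_real ((vnorm2 w)\<^sup>2) = (\<Sum>i<dim_col X. (mat_adjoint X *\<^sub>v v) $ i * cnj (w $ i))"
    unfolding of_real_power2_vnorm2 w_def by simp
  also have "\<dots> = (\<Sum>j<dim_row X. v $ j * cnj ((X *\<^sub>v w) $ j))"
    using sum_mult_mat_vec_cnj[of v "mat_adjoint X" w] v w by simp
  finally have eq: "complex_of_real ((vnorm2 w)\<^sup>2) = (\<Sum>j<dim_row X. v $ j * cnj ((X *\<^sub>v w) $ j))" .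
  have "(vnorm2 w)\<^sup>2 = cmod (complex_of_real ((vnorm2 w)\<^sup>2))"
    by (simp only: norm_of_real abs_power2)
  also have "\<dots> \<le> vnorm2 v * vnorm2 (X *\<^sub>v w)"
    unfolding eq
    using Cauchy_Schwarz_complex_sum[of "\<lambda>j. v $ j" "\<lambda>j. cnj ((X *\<^sub>v w) $ j)" "{..<dim_row X}"] v
    by (simp add: vnorm2_def)
  also have "\<dots> \<le> vnorm2 v * (spec_norm X * vnorm2 w)"
    using vnorm2_mult_mat_vec_le[OF w] vnorm2_nonneg by (intro mult_left_mono) auto
  finally have "(vnorm2 w)\<^sup>2 \<le> vnorm2 v * (spec_norm X * vnorm2 w)" .
  then have "vnorm2 w \<le> spec_norm X * vnorm2 v"
    using vnorm2_nonneg[of w] vnorm2_nonneg[of v] spec_norm_nonneg[of X]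
    by (cases "vnorm2 w = 0") (auto simp: power2_eq_square mult_ac)
  then show ?thesis unfolding w_def .
qed

lemma fro_norm_mult_le_of_vnorm2_le:
  assumes dims: "dim_col M = dim_row Y"
    and bound: "\<And>v. v \<in> carrier_vec (dim_row Y) \<Longrightarrow> vnorm2 (M *\<^sub>v v) \<le> c * vnorm2 v"
  shows "(fro_norm (M * Y))\<^sup>2 \<le> c\<^sup>2 * (fro_norm Y)\<^sup>2"
proof -
  have "col (M * Y) j = M *\<^sub>v col Y j" if "j < dim_col Y" for j
    using dims that by (intro col_mult2[of _ "dim_row M" "dim_col M" _ "dim_col Y"]) auto
  then have "(fro_norm (M * Y))\<^sup>2 = (\<Sum>j<dim_col Y. (vnorm2 (M *\<^sub>v col Y j))\<^sup>2)"
    unfolding power2_fro_norm_cols by simp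
  also have "\<dots> \<le> (\<Sum>j<dim_col Y. c\<^sup>2 * (vnorm2 (col Y j))\<^sup>2)"
    using bound vnorm2_nonneg by (intro sum_mono) (metis col_dim power_mono power_mult_distrib)
  also have "\<dots> = c\<^sup>2 * (fro_norm Y)\<^sup>2"
    unfolding power2_fro_norm_cols by (simp add: sum_distrib_left)
  finally show ?thesis .
qed

lemma fro_norm_mult_le_left:
  "dim_col X = dim_row Y \<Longrightarrow> (fro_norm (X * Y))\<^sup>2 \<le> (spec_norm X)\<^sup>2 * (fro_norm Y)\<^sup>2"
  by (rule fro_norm_mult_le_of_vnorm2_le) (auto intro: vnorm2_mult_mat_vec_le)

lemma fro_norm_mult_le_right:
  assumes "dim_col X = dim_row Y"
  shows "(fro_norm (X * Y))\<^sup>2 \<le> (fro_norm X)\<^sup>2 * (spec_norm Y)\<^sup>2"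
proof -
  have "(fro_norm (mat_adjoint Y * mat_adjoint X))\<^sup>2 \<le> (spec_norm Y)\<^sup>2 * (fro_norm (mat_adjoint X))\<^sup>2"
    using assms by (intro fro_norm_mult_le_of_vnorm2_le) (auto intro: vnorm2_adjoint_mult_mat_vec_le)
  then show ?thesis
    using assms by (simp add: mat_adjoint_mult[symmetric] mult.commute)
qed

section \<open>Existence and uniqueness of the Moore--Penrose inverse\<close>

lemma mult_mat_vec_eq_0_of_adjoint:
  fixes M :: "complex mat"
  assumes v: "v \<in> carrier_vec (dim_col M)" and zero: "mat_adjoint M *\<^sub>v (M *\<^sub>v v) = 0\<^sub>v (dim_col M)"
  shows "M *\<^sub>v v = 0\<^sub>v (dim_row M)"
proof -
  have Mv: "M *\<^sub>v v \<in> carrier_vec (dim_row M)"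
    by (rule carrier_vecI) simp
  have "complex_of_real ((vnorm2 (M *\<^sub>v v))\<^sup>2)
      = (\<Sum>j<dim_col M. v $ j * cnj ((mat_adjoint M *\<^sub>v (M *\<^sub>v v)) $ j))"
    unfolding of_real_power2_vnorm2 using sum_mult_mat_vec_cnj[OF v Mv] by simp
  also have "\<dots> = 0"
    using zero by simp
  finally have "vnorm2 (M *\<^sub>v v) = 0"
    by simp
  then show ?thesis
    using Mv by (simp add: vnorm2_eq_0_iff)
qed

lemma mult_mat_vec_unit_vec:
  "(F::'a::semiring_1 mat) \<in> carrier_mat n k \<Longrightarrow> i < k \<Longrightarrow> F *\<^sub>v unit_vec k i = col F i"
  by (intro eq_vecI) auto

lemma (in vec_space) mat_of_cols_mult_vec_eq_lincomb:
  assumes fs: "set fs \<subseteq> carrier_vec n" "distinct fs"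
  shows "mat_of_cols n fs *\<^sub>v vec (length fs) (\<lambda>i. a (fs ! i)) = lincomb a (set fs)"
proof -
  let ?F = "mat_of_cols n fs"
  have col: "col ?F i = fs ! i" if "i < length fs" for i
    using fs that by (intro col_mat_of_cols) auto
  have "?F *\<^sub>v vec (length fs) (\<lambda>i. a (col ?F i)) = lincomb a (set (cols ?F))"
    using fs by (intro mat_mult_eq_lincomb) auto
  moreover have "vec (length fs) (\<lambda>i. a (col ?F i)) = vec (length fs) (\<lambda>i. a (fs ! i))"
    using col by (intro eq_vecI) auto
  ultimately show ?thesis
    using fs by simp
qed

lemma (in vec_space) mat_of_cols_mult_vec_eq_0:
  assumes fs: "set fs \<subseteq> carrier_vec n" "distinct fs" and indpt: "lin_indpt (set fs)"
    and c: "c \<in> carrier_vec (length fs)" and zero: "mat_of_cols n fs *\<^sub>v c = 0\<^sub>v n"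
  shows "c = 0\<^sub>v (length fs)"
proof -
  define a where "a = (\<lambda>x. c $ find_first x fs)"
  have c_eq: "c = vec (length fs) (\<lambda>i. a (fs ! i))"
    unfolding a_def using c find_first_unique[OF fs(2)] by (intro eq_vecI) auto
  have "lincomb a (set fs) = 0\<^sub>v n"
    using mat_of_cols_mult_vec_eq_lincomb[OF fs, of a] c_eq zero by simp
  then have "\<forall>v\<in>set fs. a v = 0"
    using indpt List.finite_set[of fs] unfolding lin_dep_def by auto
  then show ?thesis
    using c_eq by (intro eq_vecI) auto
qed

lemma (in vec_space) col_in_span_maximal_indpt:
  assumes A: "A \<in> carrier_mat n nc" and j: "j < nc"
    and max: "maximal S (\<lambda>T. T \<subseteq> set (cols A) \<and> lin_indpt T)"
  shows "col A j \<in> span S"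
proof -
  have S: "S \<subseteq> set (cols A)" "lin_indpt S"
    using max unfolding maximal_def by auto
  have S_carrier: "S \<subseteq> carrier_vec n"
    using S(1) cols_dim A by blast
  have col: "col A j \<in> set (cols A)" "col A j \<in> carrier_vec n"
    using j A by (simp_all add: cols_def)
  show ?thesis
  proof (cases "col A j \<in> S")
    case True
    then show ?thesis
      using in_own_span[OF S_carrier] by blast
  next
    case False
    have "\<not> lin_indpt (S \<union> {col A j})"
    proof
      assume "lin_indpt (S \<union> {col A j})"
      then have "S \<union> {col A j} = S"
        using max col(1) unfolding maximal_def by blast
      then show False
        using False by blast
    qed
    then show ?thesis
      using lin_dep_iff_in_span[OF S_carrier S(2) col(2) False] by simp
  qed
qed

text \<open>\<open>F\<close> collects a maximal linearly independent set of columns of \<open>A\<close>; the columns of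
  \<open>G\<close> belonging to these columns are unit vectors.\<close>
lemma (in vec_space) rank_factorization:
  assumes A: "A \<in> carrier_mat n nc"
  shows "\<exists>k F G. F \<in> carrier_mat n k \<and> G \<in> carrier_mat k nc \<and> A = F * G \<and> rank A = k \<and>
     (\<forall>c \<in> carrier_vec k. F *\<^sub>v c = 0\<^sub>v n \<longrightarrow> c = 0\<^sub>v k) \<and> (\<forall>i<k. \<exists>j<nc. col G j = unit_vec k i)"
proof -
  obtain S where max: "maximal S (\<lambda>T. T \<subseteq> set (cols A) \<and> lin_indpt T)"
    using maximal_exists[of "(\<lambda>T. T \<subseteq> set (cols A) \<and> lin_indpt T)" "card (set (cols A))" "{}"]
    by (meson List.finite_set card_mono empty_iff empty_subsetI finite_lin_indpt2 rev_finite_subset)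
  then have S: "S \<subseteq> set (cols A)" "lin_indpt S"
    unfolding maximal_def by auto
  have finS: "finite S"
    using S(1) by (rule finite_subset) simp
  obtain fs where fs: "set fs = S" "distinct fs"
    using finite_distinct_list[OF finS] by blast
  have fs_carrier: "set fs \<subseteq> carrier_vec n"
    using fs S(1) cols_dim A by blast
  define k F where "k = length fs" and "F = mat_of_cols n fs"
  have F: "F \<in> carrier_mat n k"
    unfolding F_def k_def by simp
  have rk: "rank A = k"
    using rank_card_indpt[OF A max] fs distinct_card unfolding k_def by metis
  have inj: "\<forall>c \<in> carrier_vec k. F *\<^sub>v c = 0\<^sub>v n \<longrightarrow> c = 0\<^sub>v k"
    using mat_of_cols_mult_vec_eq_0[OF fs_carrier fs(2)] S(2) fs(1) unfolding F_def k_def by blast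
  have "\<exists>c\<in>carrier_vec k. col A j = F *\<^sub>v c" if j: "j < nc" for j
  proof -
    obtain a where "lincomb a S = col A j"
      using col_in_span_maximal_indpt[OF A j max] finite_in_span[OF finS fs_carrier[unfolded fs(1)]]
      by blast
    then show ?thesis
      using mat_of_cols_mult_vec_eq_lincomb[OF fs_carrier fs(2), of a] fs(1)
      unfolding F_def k_def by (intro bexI[of _ "vec (length fs) (\<lambda>i. a (fs ! i))"]) auto
  qed
  then obtain cf where cf: "\<And>j. j < nc \<Longrightarrow> cf j \<in> carrier_vec k \<and> col A j = F *\<^sub>v cf j"
    by metis
  define G where "G = mat_of_cols k (map cf [0..<nc])"
  have G: "G \<in> carrier_mat k nc"
    unfolding G_def using mat_of_cols_carrier(1)[of k "map cf [0..<nc]"] by simp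
  have colG: "col G j = cf j" if "j < nc" for j
    unfolding G_def using that cf by (subst col_mat_of_cols) auto
  have "A = F * G"
  proof (rule mat_col_eqI)
    fix j assume "j < dim_col (F * G)"
    then have j: "j < nc"
      using G by simp
    then show "col A j = col (F * G) j"
      using cf[OF j] colG[OF j] col_mult2[OF F G j] by simp
  qed (use A F G in auto)
  moreover have "\<exists>j<nc. col G j = unit_vec k i" if i: "i < k" for i
  proof -
    have "fs ! i \<in> set (cols A)"
      using i fs S(1) unfolding k_def by auto
    then obtain j where j: "j < nc" "col A j = fs ! i"
      using A by (auto simp: cols_def)
    have "col F i = fs ! i"
      unfolding F_def k_def using i fs_carrier by (intro col_mat_of_cols) (auto simp: k_def)
    then have "F *\<^sub>v cf j = F *\<^sub>v unit_vec k i"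
      using cf[OF j(1)] j(2) mult_mat_vec_unit_vec[OF F i] by simp
    then have "F *\<^sub>v (cf j - unit_vec k i) = 0\<^sub>v n"
      using cf[OF j(1)] F by (simp add: mult_minus_distrib_mat_vec)
    then have "cf j - unit_vec k i = 0\<^sub>v k"
      using inj cf[OF j(1)] by simp
    then have "cf j = unit_vec k i"
      using cf[OF j(1)] by (metis carrier_vecD index_minus_vec(1) index_unit_vec(3) index_zero_vec(1)
          eq_vecI right_minus_eq)
    then show ?thesis
      using j colG by auto
  qed
  ultimately show ?thesis
    using F G rk inj by blast
qed

lemma gram_mat_inverse:
  fixes M :: "complex mat"
  assumes M: "M \<in> carrier_mat n k"
    and inj: "\<And>c. c \<in> carrier_vec k \<Longrightarrow> M *\<^sub>v c = 0\<^sub>v n \<Longrightarrow> c = 0\<^sub>v k"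
  obtains L where "L \<in> carrier_mat k k" "L * (mat_adjoint M * M) = 1\<^sub>m k"
    "(mat_adjoint M * M) * L = 1\<^sub>m k" "mat_adjoint L = L"
proof -
  define N where "N = mat_adjoint M * M"
  have N: "N \<in> carrier_mat k k"
    unfolding N_def using M by auto
  have "det N \<noteq> 0"
  proof
    assume "det N = 0"
    then obtain c where c: "c \<in> carrier_vec k" "c \<noteq> 0\<^sub>v k" "N *\<^sub>v c = 0\<^sub>v k"
      using det_0_iff_vec_prod_zero_field[OF N] by blast
    have "mat_adjoint M *\<^sub>v (M *\<^sub>v c) = 0\<^sub>v (dim_col M)"
      using c M unfolding N_def by (simp add: assoc_mult_mat_vec[symmetric, of _ k n _ k])
    then have "M *\<^sub>v c = 0\<^sub>v n"
      using c M mult_mat_vec_eq_0_of_adjoint[of c M] by auto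
    then show False
      using inj c by blast
  qed
  then have "N \<in> Units (ring_mat TYPE(complex) k ())"
    by (rule det_non_zero_imp_unit[OF N])
  then obtain L where L: "L \<in> carrier_mat k k" "L * N = 1\<^sub>m k"
    unfolding Units_def ring_mat_def by auto
  have NL: "N * L = 1\<^sub>m k"
    using mat_mult_left_right_inverse[OF L(1) N L(2)] .
  have "mat_adjoint L = mat_adjoint L * (N * L)"
    using carrier_matD[OF L(1)] by (simp add: NL)
  also have "\<dots> = mat_adjoint (N * L) * L"
    using L M unfolding N_def by (simp add: mat_adjoint_mult assoc_mult_mat')
  also have "\<dots> = L"
    using L NL by simp
  finally show ?thesis
    using that L NL unfolding N_def by blast
qed

lemma moore_penrose_unique:
  fixes A X Y :: "complex mat"
  assumes X: "is_moore_penrose A X" and Y: "is_moore_penrose A Y"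
  shows "X = Y"
proof -
  note dims = carrier_matD[OF conjunct1[OF X[unfolded is_moore_penrose_def]]]
    carrier_matD[OF conjunct1[OF Y[unfolded is_moore_penrose_def]]]
  note assoc = assoc_mult_mat'[OF _ _] mat_adjoint_mult
  have X1: "A * X * A = A" and X2: "X * A * X = X" and X3: "mat_adjoint X * mat_adjoint A = A * X"
    and X4: "mat_adjoint A * mat_adjoint X = X * A"
    using X dims unfolding is_moore_penrose_def by (auto simp: mat_adjoint_mult)
  have Y1: "A * Y * A = A" and Y2: "Y * A * Y = Y" and Y3: "mat_adjoint Y * mat_adjoint A = A * Y"
    and Y4: "mat_adjoint A * mat_adjoint Y = Y * A"
    using Y dims unfolding is_moore_penrose_def by (auto simp: mat_adjoint_mult)
  have "X = X * (mat_adjoint X * mat_adjoint (A * Y * A))"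
    using X2 X3 Y1 dims by (simp add: assoc_mult_mat')
  also have "\<dots> = X * ((mat_adjoint X * mat_adjoint A) * (mat_adjoint Y * mat_adjoint A))"
    using dims by (simp add: mat_adjoint_mult assoc_mult_mat')
  also have "\<dots> = (X * A * X) * A * Y"
    using X3 Y3 dims by (simp add: assoc_mult_mat')
  finally have XAY: "X = X * A * Y"
    using X2 by simp
  have "Y = (mat_adjoint (A * X * A) * mat_adjoint Y) * Y"
    using Y2 Y4 X1 dims by (simp add: assoc_mult_mat')
  also have "\<dots> = ((mat_adjoint A * mat_adjoint X) * (mat_adjoint A * mat_adjoint Y)) * Y"
    using dims by (simp add: mat_adjoint_mult assoc_mult_mat')
  also have "\<dots> = X * A * (Y * A * Y)"
    using X4 Y4 dims by (simp add: assoc_mult_mat')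
  finally show ?thesis
    using XAY Y2 by simp
qed

lemma adjoint_mult_vec_eq_0_of_unit_cols:
  fixes G :: "complex mat"
  assumes G: "G \<in> carrier_mat k n" and unit: "\<forall>i<k. \<exists>j<n. col G j = unit_vec k i"
    and c: "c \<in> carrier_vec k" and zero: "mat_adjoint G *\<^sub>v c = 0\<^sub>v n"
  shows "c = 0\<^sub>v k"
proof (rule eq_vecI)
  fix i assume "i < dim_vec (0\<^sub>v k :: complex vec)"
  then obtain j where j: "j < n" "col G j = unit_vec k i" "i < k"
    using unit by auto
  have "row (mat_adjoint G) j = unit_vec k i"
  proof (rule eq_vecI)
    fix l assume "l < dim_vec (unit_vec k i)"
    then have l: "l < k" by simp
    then have "G $$ (l, j) = unit_vec k i $ l"
      using j G by (metis col_def index_vec carrier_matD(1))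
    then show "row (mat_adjoint G) j $ l = unit_vec k i $ l"
      using l j G by (auto simp: unit_vec_def)
  qed (use G in simp)
  then have "(mat_adjoint G *\<^sub>v c) $ j = c $ i"
    using G j c by simp
  then show "c $ i = 0\<^sub>v k $ i"
    using zero j by simp
qed (use c in simp)

lemma moore_penrose_of_factorization:
  fixes F G K L :: "complex mat"
  assumes F: "F \<in> carrier_mat m k" and G: "G \<in> carrier_mat k n"
    and L: "L \<in> carrier_mat k k" "L * (mat_adjoint F * F) = 1\<^sub>m k" "mat_adjoint L = L"
    and K: "K \<in> carrier_mat k k" "(G * mat_adjoint G) * K = 1\<^sub>m k" "K * (G * mat_adjoint G) = 1\<^sub>m k"
      "mat_adjoint K = K"
  defines "X \<equiv> mat_adjoint G * K * L * mat_adjoint F"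
  shows "is_moore_penrose (F * G) X" and "trace (F * G * X) = of_nat k"
proof -
  note dims = carrier_matD[OF F] carrier_matD[OF G] carrier_matD[OF L(1)] carrier_matD[OF K(1)]
  have AX: "F * G * X = F * (L * mat_adjoint F)"
  proof -
    have "F * G * X = F * ((G * mat_adjoint G * K) * (L * mat_adjoint F))"
      unfolding X_def using dims by (simp add: assoc_mult_mat')
    then show ?thesis using K(2) dims by simp
  qed
  have XA: "X * (F * G) = mat_adjoint G * (K * G)"
  proof -
    have "X * (F * G) = mat_adjoint G * (K * ((L * (mat_adjoint F * F)) * G))"
      unfolding X_def using dims by (simp add: assoc_mult_mat')
    then show ?thesis using L(2) dims by simp
  qed
  have "F * G * X * (F * G) = F * ((L * (mat_adjoint F * F)) * G)"
    unfolding AX using dims by (simp add: assoc_mult_mat')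
  then have AXA: "F * G * X * (F * G) = F * G"
    using L(2) dims by simp
  have "X * (F * G) * X = mat_adjoint G * (K * G) * X"
    using XA by simp
  also have "\<dots> = mat_adjoint G * ((K * (G * mat_adjoint G)) * (K * (L * mat_adjoint F)))"
    unfolding X_def using dims by (simp add: assoc_mult_mat')
  also have "\<dots> = X"
    using K(3) dims unfolding X_def by (simp add: assoc_mult_mat')
  finally have XAX: "X * (F * G) * X = X" .
  have "mat_adjoint (F * G * X) = F * G * X"
    unfolding AX using dims L(3) by (simp add: mat_adjoint_mult assoc_mult_mat')
  moreover have "mat_adjoint (X * (F * G)) = X * (F * G)"
    unfolding XA using dims K(4) by (simp add: mat_adjoint_mult assoc_mult_mat')
  moreover have "X \<in> carrier_mat n m"
    unfolding X_def using dims by auto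
  ultimately show "is_moore_penrose (F * G) X"
    unfolding is_moore_penrose_def using dims AXA XAX by auto
  have "trace (F * G * X) = trace ((L * mat_adjoint F) * F)"
    unfolding AX using dims by (intro trace_mult_comm[of _ m k]) auto
  also have "\<dots> = of_nat k"
    using L(2) dims by (simp add: assoc_mult_mat')
  finally show "trace (F * G * X) = of_nat k" .
qed

lemma moore_penrose_exists:
  fixes A :: "complex mat"
  assumes A: "A \<in> carrier_mat m n"
  shows "\<exists>X. is_moore_penrose A X \<and> trace (A * X) = of_nat (crank A)"
proof -
  interpret vec_space "TYPE(complex)" m .
  obtain k F G where F: "F \<in> carrier_mat m k" and G: "G \<in> carrier_mat k n" and AFG: "A = F * G"
    and rk: "rank A = k" and inj: "\<forall>c\<in>carrier_vec k. F *\<^sub>v c = 0\<^sub>v m \<longrightarrow> c = 0\<^sub>v k"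
    and unit: "\<forall>i<k. \<exists>j<n. col G j = unit_vec k i"
    using rank_factorization[OF A] by blast
  obtain L where L: "L \<in> carrier_mat k k" "L * (mat_adjoint F * F) = 1\<^sub>m k" "mat_adjoint L = L"
    using gram_mat_inverse[OF F] inj by metis
  obtain K where K: "K \<in> carrier_mat k k" "(G * mat_adjoint G) * K = 1\<^sub>m k"
    "K * (G * mat_adjoint G) = 1\<^sub>m k" "mat_adjoint K = K"
    using gram_mat_inverse[of "mat_adjoint G" n k] G adjoint_mult_vec_eq_0_of_unit_cols[OF G unit]
    by auto
  have "crank A = k"
    using rk A unfolding crank_def by simp
  then show ?thesis
    using moore_penrose_of_factorization[OF F G L K] unfolding AFG by blast
qed

lemma is_moore_penrose_pinv: "is_moore_penrose A (pinv A)"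
  unfolding pinv_def using moore_penrose_exists[of A "dim_row A" "dim_col A"] moore_penrose_unique
  by (metis carrier_matI theI)

lemma trace_mult_pinv: "trace (A * pinv A) = of_nat (crank A)"
  using moore_penrose_exists[of A "dim_row A" "dim_col A"] is_moore_penrose_pinv moore_penrose_unique
  by (metis carrier_matI)

section \<open>Orthogonal projections\<close>

definition orth_proj :: "complex mat \<Rightarrow> nat \<Rightarrow> bool" where
  "orth_proj P n \<longleftrightarrow> P \<in> carrier_mat n n \<and> mat_adjoint P = P \<and> P * P = P"

lemma orth_proj_mult_compl:
  assumes "orth_proj P n"
  shows "P * (1\<^sub>m n - P) = 0\<^sub>m n n"
  using assms unfolding orth_proj_def by (auto simp: mult_minus_distrib_mat' minus_self_mat)

lemma orth_proj_compl:
  assumes P: "orth_proj P n"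
  shows "orth_proj (1\<^sub>m n - P) n"
proof -
  have dims: "P \<in> carrier_mat n n" "mat_adjoint P = P"
    using P unfolding orth_proj_def by auto
  have "(1\<^sub>m n - P) * (1\<^sub>m n - P) = (1\<^sub>m n - P) - P * (1\<^sub>m n - P)"
    using dims by (simp add: minus_mult_distrib_mat')
  also have "\<dots> = 1\<^sub>m n - P"
    using orth_proj_mult_compl[OF P] dims by (simp add: minus_zero_mat)
  finally show ?thesis
    unfolding orth_proj_def using dims by (simp add: mat_adjoint_minus minus_carrier_mat)
qed

lemma fro_norm_split_left:
  assumes P: "orth_proj P n" and Y: "dim_row Y = n"
  shows "(fro_norm Y)\<^sup>2 = (fro_norm (P * Y))\<^sup>2 + (fro_norm ((1\<^sub>m n - P) * Y))\<^sup>2"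
proof -
  have dims: "P \<in> carrier_mat n n" "mat_adjoint P = P"
    using P unfolding orth_proj_def by auto
  have "mat_adjoint (P * Y) * ((1\<^sub>m n - P) * Y) = mat_adjoint Y * ((P * (1\<^sub>m n - P)) * Y)"
    using dims Y by (simp add: mat_adjoint_mult assoc_mult_mat')
  also have "\<dots> = 0\<^sub>m (dim_col Y) (dim_col Y)"
    using orth_proj_mult_compl[OF P] Y by simp
  finally have "(fro_norm (P * Y + (1\<^sub>m n - P) * Y))\<^sup>2 = (fro_norm (P * Y))\<^sup>2 + (fro_norm ((1\<^sub>m n - P) * Y))\<^sup>2"
    using dims Y by (intro fro_norm_add_orthogonal[of _ n "dim_col Y"]) auto
  moreover have "P * Y + (1\<^sub>m n - P) * Y = Y"
    using dims Y by (intro eq_matI) (auto simp: minus_mult_distrib_mat')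
  ultimately show ?thesis by simp
qed

lemma fro_norm_split_right:
  assumes P: "orth_proj P n" and Y: "dim_col Y = n"
  shows "(fro_norm Y)\<^sup>2 = (fro_norm (Y * P))\<^sup>2 + (fro_norm (Y * (1\<^sub>m n - P)))\<^sup>2"
proof -
  have "mat_adjoint (Y * P) = P * mat_adjoint Y" "mat_adjoint (Y * (1\<^sub>m n - P)) = (1\<^sub>m n - P) * mat_adjoint Y"
    using P orth_proj_compl[OF P] Y unfolding orth_proj_def by (auto simp: mat_adjoint_mult)
  then show ?thesis
    using fro_norm_split_left[OF P, of "mat_adjoint Y"] Y by (metis dim_mat_adjoint(1) fro_norm_adjoint)
qed

lemma fro_norm_zero [simp]: "fro_norm (0\<^sub>m n k) = 0"
  unfolding fro_norm_def by simp

lemma fro_norm_off_diagonal_blocks: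
  assumes P: "orth_proj P m" and Q: "orth_proj Q n" and E: "E \<in> carrier_mat m n"
    and zero: "(1\<^sub>m m - P) * E * (1\<^sub>m n - Q) = 0\<^sub>m m n"
  shows "(fro_norm ((1\<^sub>m m - P) * E * Q))\<^sup>2 + (fro_norm (P * E * (1\<^sub>m n - Q)))\<^sup>2
       = (fro_norm E)\<^sup>2 - (fro_norm (P * E * Q))\<^sup>2"
proof -
  have dims: "P \<in> carrier_mat m m" "Q \<in> carrier_mat n n"
    using P Q unfolding orth_proj_def by auto
  have "(fro_norm E)\<^sup>2 = (fro_norm (P * E))\<^sup>2 + (fro_norm ((1\<^sub>m m - P) * E))\<^sup>2"
    using E by (intro fro_norm_split_left[OF P]) simp
  moreover have "(fro_norm (P * E))\<^sup>2 = (fro_norm (P * E * Q))\<^sup>2 + (fro_norm (P * E * (1\<^sub>m n - Q)))\<^sup>2"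
    using E dims by (intro fro_norm_split_right[OF Q]) simp
  moreover have "(fro_norm ((1\<^sub>m m - P) * E))\<^sup>2
      = (fro_norm ((1\<^sub>m m - P) * E * Q))\<^sup>2 + (fro_norm ((1\<^sub>m m - P) * E * (1\<^sub>m n - Q)))\<^sup>2"
    using E dims by (intro fro_norm_split_right[OF Q]) simp
  ultimately show ?thesis
    using zero by simp
qed

lemma of_real_power2_fro_norm_proj_mult:
  assumes P: "orth_proj P n" and Q: "orth_proj Q n"
  shows "complex_of_real ((fro_norm (P * Q))\<^sup>2) = trace (P * Q)"
proof -
  have dims: "P \<in> carrier_mat n n" "Q \<in> carrier_mat n n"
    and herm: "mat_adjoint P = P" "mat_adjoint Q = Q"
    and idem: "P * P = P" "Q * Q = Q"
    using P Q unfolding orth_proj_def by auto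
  have "complex_of_real ((fro_norm (P * Q))\<^sup>2) = trace (mat_adjoint (P * Q) * (P * Q))"
    by (rule trace_adjoint_mult_self[symmetric])
  also have "\<dots> = trace (Q * (P * P * Q))"
    using dims herm by (simp add: mat_adjoint_mult assoc_mult_mat')
  also have "\<dots> = trace (P * Q * Q)"
    using dims idem by (simp add: trace_mult_comm[of Q n n] assoc_mult_mat')
  also have "\<dots> = trace (P * Q)"
    using dims idem by (simp add: assoc_mult_mat')
  finally show ?thesis .
qed

lemma fro_norm_proj_mult_compl_eq:
  assumes P: "orth_proj P n" and Q: "orth_proj Q n" and tr: "trace P = trace Q"
  shows "(fro_norm (P * (1\<^sub>m n - Q)))\<^sup>2 = (fro_norm ((1\<^sub>m n - P) * Q))\<^sup>2"
proof -
  have dims: "P \<in> carrier_mat n n" "Q \<in> carrier_mat n n"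
    using P Q unfolding orth_proj_def by auto
  have "complex_of_real ((fro_norm (P * (1\<^sub>m n - Q)))\<^sup>2) = trace P - trace (P * Q)"
    using of_real_power2_fro_norm_proj_mult[OF P orth_proj_compl[OF Q]] dims
    by (simp add: mult_minus_distrib_mat' trace_minus[of _ n])
  moreover have "complex_of_real ((fro_norm ((1\<^sub>m n - P) * Q))\<^sup>2) = trace Q - trace (P * Q)"
    using of_real_power2_fro_norm_proj_mult[OF orth_proj_compl[OF P] Q] dims
    by (simp add: minus_mult_distrib_mat' trace_minus[of _ n])
  ultimately show ?thesis
    using tr of_real_eq_iff by metis
qed

lemma pinv_carrier: "pinv A \<in> carrier_mat (dim_col A) (dim_row A)"
  using is_moore_penrose_pinv unfolding is_moore_penrose_def by blast

lemma dim_pinv [simp]: "dim_row (pinv A) = dim_col A" "dim_col (pinv A) = dim_row A"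
  using pinv_carrier by auto

lemma mult_pinv_mult [simp]: "A * pinv A * A = A"
  using is_moore_penrose_pinv unfolding is_moore_penrose_def by blast

lemma pinv_mult_pinv [simp]: "pinv A * A * pinv A = pinv A"
  using is_moore_penrose_pinv unfolding is_moore_penrose_def by blast

lemma mult_pinv_mult' [simp]: "A * (pinv A * A) = A"
  by (simp add: assoc_mult_mat'[symmetric])

lemma pinv_mult_pinv' [simp]: "pinv A * (A * pinv A) = pinv A"
  by (simp add: assoc_mult_mat'[symmetric])

lemma mult_pinv_mult_mult [simp]: "dim_row Z = dim_col A \<Longrightarrow> A * (pinv A * (A * Z)) = A * Z"
  by (simp add: assoc_mult_mat'[symmetric])

lemma pinv_mult_pinv_mult [simp]: "dim_row Z = dim_row A \<Longrightarrow> pinv A * (A * (pinv A * Z)) = pinv A * Z"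
  by (simp add: assoc_mult_mat'[symmetric])

lemma trace_pinv_mult: "trace (pinv A * A) = of_nat (crank A)"
  using trace_mult_comm[OF pinv_carrier, of A] trace_mult_pinv[of A] by simp

lemma orth_proj_mult_pinv: "orth_proj (A * pinv A) (dim_row A)"
  using is_moore_penrose_pinv[of A] unfolding orth_proj_def is_moore_penrose_def
  by (auto simp flip: assoc_mult_mat' intro!: carrier_matI)

lemma orth_proj_pinv_mult: "orth_proj (pinv A * A) (dim_col A)"
  using is_moore_penrose_pinv[of A] unfolding orth_proj_def is_moore_penrose_def
  by (auto simp flip: assoc_mult_mat' intro!: carrier_matI)

section \<open>Perturbation bounds\<close>

lemma compl_proj_mult_diff_mult_compl_proj:
  assumes A: "A \<in> carrier_mat m n" and B: "B \<in> carrier_mat m n"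
  shows "(1\<^sub>m m - A * pinv A) * (B - A) * (1\<^sub>m n - pinv B * B) = 0\<^sub>m m n"
proof -
  define C where "C = 1\<^sub>m m - A * pinv A"
  have dC: "dim_row C = m" "dim_col C = m"
    unfolding C_def using A by auto
  have "C * A = 0\<^sub>m m n"
    unfolding C_def using A by (simp add: minus_mult_distrib_mat' minus_self_mat)
  then have "C * (B - A) = C * B"
    using A B dC by (simp add: mult_minus_distrib_mat' minus_zero_mat)
  moreover have "B * (1\<^sub>m n - pinv B * B) = 0\<^sub>m m n"
    using B by (simp add: mult_minus_distrib_mat' assoc_mult_mat' minus_self_mat)
  ultimately show ?thesis
    unfolding C_def[symmetric] using B dC by (simp add: assoc_mult_mat')
qed

lemma fro_norm_pinv_proj_sandwich_le:
  assumes A: "A \<in> carrier_mat m n" and B: "B \<in> carrier_mat m n" and E: "E \<in> carrier_mat m n"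
  shows "max ((fro_norm (A * pinv A * E * pinv B))\<^sup>2 / (spec_norm (pinv B))\<^sup>2)
             ((fro_norm (pinv A * E * pinv B * B))\<^sup>2 / (spec_norm (pinv A))\<^sup>2)
         \<le> (fro_norm (A * pinv A * E * (pinv B * B)))\<^sup>2"
proof -
  define W where "W = A * pinv A * E * (pinv B * B)"
  have "A * pinv A * E * pinv B = W * pinv B"
    unfolding W_def using pinv_mult_pinv[of B] A B E by (simp add: assoc_mult_mat')
  then have 1: "(fro_norm (A * pinv A * E * pinv B))\<^sup>2 \<le> (fro_norm W)\<^sup>2 * (spec_norm (pinv B))\<^sup>2"
    using fro_norm_mult_le_right[of W "pinv B"] B unfolding W_def by simp
  have "pinv A * E * pinv B * B = pinv A * W"
    unfolding W_def using pinv_mult_pinv[of A] A B E by (simp add: assoc_mult_mat')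
  then have 2: "(fro_norm (pinv A * E * pinv B * B))\<^sup>2 \<le> (spec_norm (pinv A))\<^sup>2 * (fro_norm W)\<^sup>2"
    using fro_norm_mult_le_left[of "pinv A" W] A unfolding W_def by simp
  show ?thesis
    using 1 2 unfolding W_def[symmetric] by (auto simp: divide_le_eq mult.commute)
qed

context
  fixes A B :: "complex mat" and m n :: nat
  assumes A: "A \<in> carrier_mat m n" and B: "B \<in> carrier_mat m n"
begin

private lemma dims:
  "dim_row A = m" "dim_col A = n" "dim_row B = m" "dim_col B = n"
  "dim_row (pinv A) = n" "dim_col (pinv A) = m" "dim_row (pinv B) = n" "dim_col (pinv B) = m"
  using A B by auto

private lemma projs:
  "orth_proj (A * pinv A) m" "orth_proj (pinv A * A) n"
  "orth_proj (B * pinv B) m" "orth_proj (pinv B * B) n"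
  using orth_proj_mult_pinv[of A] orth_proj_pinv_mult[of A]
    orth_proj_mult_pinv[of B] orth_proj_pinv_mult[of B] dims by simp_all

private lemma compls:
  "orth_proj (1\<^sub>m m - A * pinv A) m" "orth_proj (1\<^sub>m n - pinv A * A) n"
  "orth_proj (1\<^sub>m m - B * pinv B) m" "orth_proj (1\<^sub>m n - pinv B * B) n"
  using projs by (simp_all add: orth_proj_compl)

private lemma proj_dims:
  "dim_row (A * pinv A) = m" "dim_col (A * pinv A) = m" "dim_row (pinv A * A) = n" "dim_col (pinv A * A) = n"
  "dim_row (B * pinv B) = m" "dim_col (B * pinv B) = m" "dim_row (pinv B * B) = n" "dim_col (pinv B * B) = n"
  using dims by simp_all

lemma fro_norm_pinv_diff_split:
  "(fro_norm (pinv B - pinv A))\<^sup>2 = (fro_norm (pinv B * (B - A) * pinv A))\<^sup>2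
     + (fro_norm (pinv B * (1\<^sub>m m - A * pinv A)))\<^sup>2 + (fro_norm ((1\<^sub>m n - pinv B * B) * pinv A))\<^sup>2"
proof -
  define X Y where "X = pinv A" and "Y = pinv B"
  define P Q where "P = A * X" and "Q = Y * B"
  define D where "D = Y - X"
  have P: "orth_proj P m" and Q: "orth_proj Q n"
    unfolding P_def Q_def X_def Y_def using projs by auto
  note d = dims[folded X_def Y_def] proj_dims[folded X_def Y_def, folded P_def Q_def]
  have QY: "Q * Y = Y"
    unfolding Q_def Y_def by simp
  have XP: "X * P = X"
    using pinv_mult_pinv[of A] d unfolding P_def X_def by (simp add: assoc_mult_mat')
  have "(fro_norm D)\<^sup>2 = (fro_norm (Q * D))\<^sup>2 + (fro_norm ((1\<^sub>m n - Q) * D))\<^sup>2"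
    using d unfolding D_def by (intro fro_norm_split_left[OF Q]) simp
  also have "(fro_norm (Q * D))\<^sup>2 = (fro_norm (Q * D * P))\<^sup>2 + (fro_norm (Q * D * (1\<^sub>m m - P)))\<^sup>2"
    using d unfolding D_def by (intro fro_norm_split_right[OF P]) simp
  also have "Q * D * P = - (Y * (B - A) * X)"
  proof -
    have "Q * D * P = Y * P - Q * X * P"
      unfolding D_def using d QY by (simp add: mult_minus_distrib_mat' minus_mult_distrib_mat')
    also have "\<dots> = Y * P - Q * X"
      using d XP by (simp add: assoc_mult_mat')
    also have "\<dots> = - (Q * X - Y * P)"
      using d by (intro minus_mat_swap) auto
    also have "Q * X - Y * P = Y * (B - A) * X"
      unfolding Q_def P_def using d
      by (simp add: mult_minus_distrib_mat' minus_mult_distrib_mat' assoc_mult_mat')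
    finally show ?thesis .
  qed
  also have "Q * D * (1\<^sub>m m - P) = Y * (1\<^sub>m m - P)"
  proof -
    have "X * (1\<^sub>m m - P) = 0\<^sub>m n m"
      using d XP by (simp add: mult_minus_distrib_mat' minus_self_mat)
    moreover have "Q * D = Y - Q * X"
      unfolding D_def using d QY by (simp add: mult_minus_distrib_mat')
    ultimately show ?thesis
      using d by (simp add: minus_mult_distrib_mat' assoc_mult_mat' minus_zero_mat)
  qed
  also have "(1\<^sub>m n - Q) * D = - ((1\<^sub>m n - Q) * X)"
  proof -
    have "(1\<^sub>m n - Q) * Y = 0\<^sub>m n m"
      using d QY by (simp add: minus_mult_distrib_mat' minus_self_mat)
    then show ?thesis
      unfolding D_def using d by (simp add: mult_minus_distrib_mat' zero_minus_mat)
  qed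
  finally show ?thesis
    unfolding D_def X_def Y_def P_def Q_def by simp
qed

lemma fro_norm_pinv_mult_compl_le:
  "(fro_norm (pinv B * (1\<^sub>m m - A * pinv A)))\<^sup>2
     \<le> (spec_norm (pinv B))^4 * (fro_norm ((1\<^sub>m m - A * pinv A) * (B - A) * (pinv B * B)))\<^sup>2"
proof -
  define Y C where "Y = pinv B" and "C = 1\<^sub>m m - A * pinv A"
  have herm: "mat_adjoint C = C" "mat_adjoint (B * Y) = B * Y"
    using compls projs unfolding C_def Y_def orth_proj_def by auto
  note d = dims[folded Y_def] proj_dims[folded Y_def]
  have dC: "dim_row C = m" "dim_col C = m"
    unfolding C_def using d by auto
  have "C * A = 0\<^sub>m m n"
    unfolding C_def using d by (simp add: minus_mult_distrib_mat' minus_self_mat)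
  then have "C * (B - A) = C * B"
    using d dC by (simp add: mult_minus_distrib_mat' minus_zero_mat)
  then have "mat_adjoint (C * (B - A) * Y) = mat_adjoint (C * (B * Y))"
    using d dC by (simp add: assoc_mult_mat')
  also have "\<dots> = B * Y * C"
    using herm d dC by (simp add: mat_adjoint_mult)
  finally have "Y * mat_adjoint (C * (B - A) * Y) = Y * C"
    using pinv_mult_pinv[of B] d dC unfolding Y_def by (simp add: assoc_mult_mat')
  then have "(fro_norm (Y * C))\<^sup>2 \<le> (spec_norm Y)\<^sup>2 * (fro_norm (C * (B - A) * Y))\<^sup>2"
    using fro_norm_mult_le_left[of Y "mat_adjoint (C * (B - A) * Y)"] d dC by simp
  also have "C * (B - A) * Y = C * (B - A) * (Y * B) * Y"
    using pinv_mult_pinv[of B] d dC unfolding Y_def by (simp add: assoc_mult_mat')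
  also have "(spec_norm Y)\<^sup>2 * (fro_norm \<dots>)\<^sup>2
      \<le> (spec_norm Y)\<^sup>2 * ((fro_norm (C * (B - A) * (Y * B)))\<^sup>2 * (spec_norm Y)\<^sup>2)"
    using d dC by (intro mult_left_mono fro_norm_mult_le_right) auto
  finally show ?thesis
    unfolding Y_def C_def by (simp add: power4_eq_xxxx power2_eq_square mult_ac)
qed

lemma fro_norm_compl_mult_pinv_le:
  "(fro_norm ((1\<^sub>m n - pinv B * B) * pinv A))\<^sup>2
     \<le> (spec_norm (pinv A))^4 * (fro_norm ((A * pinv A) * (B - A) * (1\<^sub>m n - pinv B * B)))\<^sup>2"
proof -
  define X C where "X = pinv A" and "C = 1\<^sub>m n - pinv B * B"
  have herm: "mat_adjoint C = C" "mat_adjoint (X * A) = X * A"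
    using compls projs unfolding C_def X_def orth_proj_def by auto
  note d = dims[folded X_def] proj_dims[folded X_def]
  have dC: "dim_row C = n" "dim_col C = n"
    unfolding C_def using d by auto
  have "B * C = 0\<^sub>m m n"
    unfolding C_def using d by (simp add: mult_minus_distrib_mat' assoc_mult_mat' minus_self_mat)
  then have "(B - A) * C = - (A * C)"
    using d dC by (simp add: minus_mult_distrib_mat' zero_minus_mat)
  then have "mat_adjoint (X * (B - A) * C) = - mat_adjoint ((X * A) * C)"
    using d dC by (simp add: assoc_mult_mat')
  also have "\<dots> = - (C * (X * A))"
    using herm d dC by (simp add: mat_adjoint_mult)
  finally have "mat_adjoint (X * (B - A) * C) * X = - (C * X)"
    using pinv_mult_pinv[of A] d dC unfolding X_def by (simp add: assoc_mult_mat')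
  then have "(fro_norm (C * X))\<^sup>2 \<le> (fro_norm (X * (B - A) * C))\<^sup>2 * (spec_norm X)\<^sup>2"
    using fro_norm_mult_le_right[of "mat_adjoint (X * (B - A) * C)" X] d dC by simp
  also have "X * (B - A) * C = X * ((A * X) * (B - A) * C)"
    using pinv_mult_pinv[of A] d dC unfolding X_def by (simp add: assoc_mult_mat')
  also have "(fro_norm \<dots>)\<^sup>2 * (spec_norm X)\<^sup>2
      \<le> ((spec_norm X)\<^sup>2 * (fro_norm ((A * X) * (B - A) * C))\<^sup>2) * (spec_norm X)\<^sup>2"
    using d dC by (intro mult_right_mono fro_norm_mult_le_left) auto
  finally show ?thesis
    unfolding X_def C_def by (simp add: power4_eq_xxxx power2_eq_square mult_ac)
qed

lemma fro_norm_pinv_mult_compl_le_eq_rank: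
  assumes rank: "crank A = crank B"
  shows "(fro_norm (pinv B * (1\<^sub>m m - A * pinv A)))\<^sup>2
     \<le> (spec_norm (pinv B))\<^sup>2 * (spec_norm (pinv A))\<^sup>2
        * (fro_norm ((1\<^sub>m m - B * pinv B) * (B - A) * (pinv A * A)))\<^sup>2"
proof -
  define X Y where "X = pinv A" and "Y = pinv B"
  define P R where "P = A * X" and "R = B * Y"
  have P: "orth_proj P m" and R: "orth_proj R m"
    unfolding P_def R_def X_def Y_def using projs by auto
  note d = dims[folded X_def Y_def] proj_dims[folded X_def Y_def, folded P_def R_def]
  have "(1\<^sub>m m - R) * B = 0\<^sub>m m n"
    unfolding R_def Y_def using d by (simp add: minus_mult_distrib_mat' minus_self_mat)
  then have "(1\<^sub>m m - R) * (B - A) = - ((1\<^sub>m m - R) * A)"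
    using d by (simp add: mult_minus_distrib_mat' zero_minus_mat)
  then have "(1\<^sub>m m - R) * (B - A) * (X * A) * X = - ((1\<^sub>m m - R) * P)"
    unfolding P_def X_def using d by (simp add: assoc_mult_mat')
  then have "(fro_norm ((1\<^sub>m m - R) * P))\<^sup>2 \<le> (fro_norm ((1\<^sub>m m - R) * (B - A) * (X * A)))\<^sup>2 * (spec_norm X)\<^sup>2"
    using fro_norm_mult_le_right[of "(1\<^sub>m m - R) * (B - A) * (X * A)" X] d by simp
  moreover have "Y * (1\<^sub>m m - P) = Y * (R * (1\<^sub>m m - P))"
    unfolding R_def Y_def using d by (simp add: assoc_mult_mat')
  then have "(fro_norm (Y * (1\<^sub>m m - P)))\<^sup>2 \<le> (spec_norm Y)\<^sup>2 * (fro_norm (R * (1\<^sub>m m - P)))\<^sup>2"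
    using fro_norm_mult_le_left[of Y "R * (1\<^sub>m m - P)"] d by simp
  moreover have "trace R = trace P"
    unfolding P_def R_def X_def Y_def using rank by (simp add: trace_mult_pinv)
  then have "(fro_norm (R * (1\<^sub>m m - P)))\<^sup>2 = (fro_norm ((1\<^sub>m m - R) * P))\<^sup>2"
    by (rule fro_norm_proj_mult_compl_eq[OF R P])
  ultimately show ?thesis
    unfolding X_def Y_def P_def R_def
    by (smt (verit) mult.assoc mult.commute mult_left_mono zero_le_power2)
qed

lemma fro_norm_compl_mult_pinv_le_eq_rank:
  assumes rank: "crank A = crank B"
  shows "(fro_norm ((1\<^sub>m n - pinv B * B) * pinv A))\<^sup>2
     \<le> (spec_norm (pinv B))\<^sup>2 * (spec_norm (pinv A))\<^sup>2
        * (fro_norm (B * pinv B * (B - A) * (1\<^sub>m n - pinv A * A)))\<^sup>2"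
proof -
  define X Y where "X = pinv A" and "Y = pinv B"
  define Q Q' where "Q = Y * B" and "Q' = X * A"
  have Q: "orth_proj Q n" and Q': "orth_proj Q' n"
    unfolding Q_def Q'_def X_def Y_def using projs by auto
  note d = dims[folded X_def Y_def] proj_dims[folded X_def Y_def, folded Q_def Q'_def]
  have "A * (1\<^sub>m n - Q') = 0\<^sub>m m n"
    unfolding Q'_def X_def using d by (simp add: mult_minus_distrib_mat' assoc_mult_mat' minus_self_mat)
  then have "(B - A) * (1\<^sub>m n - Q') = B * (1\<^sub>m n - Q')"
    using d by (simp add: minus_mult_distrib_mat' minus_zero_mat)
  then have "Q * (1\<^sub>m n - Q') = Y * (B * Y * (B - A) * (1\<^sub>m n - Q'))"
    unfolding Q_def Y_def using d by (simp add: assoc_mult_mat')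
  then have "(fro_norm (Q * (1\<^sub>m n - Q')))\<^sup>2 \<le> (spec_norm Y)\<^sup>2 * (fro_norm (B * Y * (B - A) * (1\<^sub>m n - Q')))\<^sup>2"
    using fro_norm_mult_le_left[of Y "B * Y * (B - A) * (1\<^sub>m n - Q')"] d by simp
  moreover have "(1\<^sub>m n - Q) * X = (1\<^sub>m n - Q) * Q' * X"
    unfolding Q'_def X_def using d by (simp add: assoc_mult_mat')
  then have "(fro_norm ((1\<^sub>m n - Q) * X))\<^sup>2 \<le> (fro_norm ((1\<^sub>m n - Q) * Q'))\<^sup>2 * (spec_norm X)\<^sup>2"
    using fro_norm_mult_le_right[of "(1\<^sub>m n - Q) * Q'" X] d by simp
  moreover have "trace Q = trace Q'"
    unfolding Q_def Q'_def X_def Y_def using rank by (simp add: trace_pinv_mult)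
  then have "(fro_norm ((1\<^sub>m n - Q) * Q'))\<^sup>2 = (fro_norm (Q * (1\<^sub>m n - Q')))\<^sup>2"
    by (rule fro_norm_proj_mult_compl_eq[OF Q Q', symmetric])
  ultimately show ?thesis
    unfolding X_def Y_def Q_def Q'_def
    by (smt (verit) mult.assoc mult.commute mult_right_mono zero_le_power2)
qed

lemma pinv_diff_bound:
  defines "E \<equiv> B - A"
  shows "(fro_norm (pinv B - pinv A))\<^sup>2
    \<le> max ((spec_norm (pinv A))^4) ((spec_norm (pinv B))^4)
        * ((fro_norm E)\<^sup>2 - max ((fro_norm (A * pinv A * E * pinv B))\<^sup>2 / (spec_norm (pinv B))\<^sup>2)
                                ((fro_norm (pinv A * E * pinv B * B))\<^sup>2 / (spec_norm (pinv A))\<^sup>2))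
      + (fro_norm (pinv B * E * pinv A))\<^sup>2"
proof -
  define M where "M = max ((spec_norm (pinv A))^4) ((spec_norm (pinv B))^4)"
  define P Q where "P = A * pinv A" and "Q = pinv B * B"
  have E: "E \<in> carrier_mat m n"
    unfolding E_def using A by (simp add: minus_carrier_mat)
  have M: "(spec_norm (pinv A))^4 \<le> M" "(spec_norm (pinv B))^4 \<le> M"
    unfolding M_def by simp_all
  have left: "(fro_norm (pinv B * (1\<^sub>m m - P)))\<^sup>2 \<le> M * (fro_norm ((1\<^sub>m m - P) * E * Q))\<^sup>2"
    using fro_norm_pinv_mult_compl_le mult_right_mono[OF M(2) zero_le_power2]
    unfolding E_def P_def Q_def by (rule order_trans)
  have right: "(fro_norm ((1\<^sub>m n - Q) * pinv A))\<^sup>2 \<le> M * (fro_norm (P * E * (1\<^sub>m n - Q)))\<^sup>2"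
    using fro_norm_compl_mult_pinv_le mult_right_mono[OF M(1) zero_le_power2]
    unfolding E_def P_def Q_def by (rule order_trans)
  have "(fro_norm (pinv B - pinv A))\<^sup>2 = (fro_norm (pinv B * E * pinv A))\<^sup>2
      + (fro_norm (pinv B * (1\<^sub>m m - P)))\<^sup>2 + (fro_norm ((1\<^sub>m n - Q) * pinv A))\<^sup>2"
    unfolding E_def P_def Q_def by (rule fro_norm_pinv_diff_split)
  also have "\<dots> \<le> (fro_norm (pinv B * E * pinv A))\<^sup>2
      + M * (fro_norm ((1\<^sub>m m - P) * E * Q))\<^sup>2 + M * (fro_norm (P * E * (1\<^sub>m n - Q)))\<^sup>2"
    by (intro add_mono order_refl left right)
  also have "\<dots> = (fro_norm (pinv B * E * pinv A))\<^sup>2 + M * ((fro_norm E)\<^sup>2 - (fro_norm (P * E * Q))\<^sup>2)"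
    using fro_norm_off_diagonal_blocks[OF projs(1,4) E] compl_proj_mult_diff_mult_compl_proj[OF A B]
    unfolding E_def P_def Q_def by (simp add: distrib_left[symmetric] add.assoc)
  also have "\<dots> \<le> (fro_norm (pinv B * E * pinv A))\<^sup>2 + M * ((fro_norm E)\<^sup>2
      - max ((fro_norm (A * pinv A * E * pinv B))\<^sup>2 / (spec_norm (pinv B))\<^sup>2)
            ((fro_norm (pinv A * E * pinv B * B))\<^sup>2 / (spec_norm (pinv A))\<^sup>2))"
    using fro_norm_pinv_proj_sandwich_le[OF A B E]
    unfolding P_def Q_def M_def by (intro add_left_mono mult_left_mono) (auto simp: le_max_iff_disj)
  finally show ?thesis
    unfolding M_def by simp
qed

lemma pinv_diff_bound_eq_rank:
  assumes rank: "crank A = crank B"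
  defines "E \<equiv> B - A"
  shows "(fro_norm (pinv B - pinv A))\<^sup>2
    \<le> (spec_norm (pinv A))\<^sup>2 * (spec_norm (pinv B))\<^sup>2
        * ((fro_norm E)\<^sup>2 - max ((fro_norm (B * pinv B * E * pinv A))\<^sup>2 / (spec_norm (pinv A))\<^sup>2)
                                ((fro_norm (pinv B * E * pinv A * A))\<^sup>2 / (spec_norm (pinv B))\<^sup>2))
      + (fro_norm (pinv B * E * pinv A))\<^sup>2"
proof -
  define K where "K = (spec_norm (pinv A))\<^sup>2 * (spec_norm (pinv B))\<^sup>2"
  define R Q' where "R = B * pinv B" and "Q' = pinv A * A"
  have E: "E \<in> carrier_mat m n"
    unfolding E_def using A by (simp add: minus_carrier_mat)
  have zero: "(1\<^sub>m m - R) * E * (1\<^sub>m n - Q') = 0\<^sub>m m n"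
  proof -
    have "(1\<^sub>m m - R) * E * (1\<^sub>m n - Q') = - ((1\<^sub>m m - R) * (A - B) * (1\<^sub>m n - Q'))"
      unfolding E_def R_def Q'_def using dims by (simp add: minus_mat_swap[of B A])
    also have "\<dots> = - 0\<^sub>m m n"
      using compl_proj_mult_diff_mult_compl_proj[OF B A] unfolding R_def Q'_def by simp
    also have "\<dots> = 0\<^sub>m m n"
      by (intro eq_matI) auto
    finally show ?thesis .
  qed
  have "(fro_norm (pinv B - pinv A))\<^sup>2 = (fro_norm (pinv B * E * pinv A))\<^sup>2
      + (fro_norm (pinv B * (1\<^sub>m m - A * pinv A)))\<^sup>2 + (fro_norm ((1\<^sub>m n - pinv B * B) * pinv A))\<^sup>2"
    unfolding E_def by (rule fro_norm_pinv_diff_split)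
  also have "\<dots> \<le> (fro_norm (pinv B * E * pinv A))\<^sup>2
      + K * (fro_norm ((1\<^sub>m m - R) * E * Q'))\<^sup>2 + K * (fro_norm (R * E * (1\<^sub>m n - Q')))\<^sup>2"
    using fro_norm_pinv_mult_compl_le_eq_rank[OF rank] fro_norm_compl_mult_pinv_le_eq_rank[OF rank]
    unfolding E_def R_def Q'_def K_def by (intro add_mono order_refl) (simp_all add: mult_ac)
  also have "\<dots> = (fro_norm (pinv B * E * pinv A))\<^sup>2 + K * ((fro_norm E)\<^sup>2 - (fro_norm (R * E * Q'))\<^sup>2)"
    using fro_norm_off_diagonal_blocks[OF projs(3,2)[folded R_def Q'_def] E zero]
    unfolding R_def Q'_def by (simp add: distrib_left[symmetric] add.assoc)
  also have "\<dots> \<le> (fro_norm (pinv B * E * pinv A))\<^sup>2 + K * ((fro_norm E)\<^sup>2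
      - max ((fro_norm (B * pinv B * E * pinv A))\<^sup>2 / (spec_norm (pinv A))\<^sup>2)
            ((fro_norm (pinv B * E * pinv A * A))\<^sup>2 / (spec_norm (pinv B))\<^sup>2))"
    using fro_norm_pinv_proj_sandwich_le[OF B A E]
    unfolding R_def Q'_def K_def by (intro add_left_mono mult_left_mono) auto
  finally show ?thesis
    unfolding K_def by simp
qed

end

theorem theorem3p5:
  fixes A B :: "complex mat" and m n r s :: nat
  assumes A: "A \<in> carrier_mat m n" and B: "B \<in> carrier_mat m n"
    and rA: "crank A = r" and rB: "crank B = s"
    and A0: "A \<noteq> 0\<^sub>m m n" and B0: "B \<noteq> 0\<^sub>m m n"
  defines "E \<equiv> B - A"
  defines "\<delta>1 \<equiv> max ((spec_norm (pinv A))^4) ((spec_norm (pinv B))^4) *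
      ((fro_norm E)\<^sup>2 - max ((fro_norm (A * pinv A * E * pinv B))\<^sup>2 / (spec_norm (pinv B))\<^sup>2)
                            ((fro_norm (pinv A * E * pinv B * B))\<^sup>2 / (spec_norm (pinv A))\<^sup>2))"
  defines "\<delta>2 \<equiv> max ((spec_norm (pinv A))^4) ((spec_norm (pinv B))^4) *
      ((fro_norm E)\<^sup>2 - max ((fro_norm (B * pinv B * E * pinv A))\<^sup>2 / (spec_norm (pinv A))\<^sup>2)
                            ((fro_norm (pinv B * E * pinv A * A))\<^sup>2 / (spec_norm (pinv B))\<^sup>2))"
  defines "\<epsilon>1 \<equiv> (spec_norm (pinv A))\<^sup>2 * (spec_norm (pinv B))\<^sup>2 *
      ((fro_norm E)\<^sup>2 - max ((fro_norm (B * pinv B * E * pinv A))\<^sup>2 / (spec_norm (pinv A))\<^sup>2)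
                            ((fro_norm (pinv B * E * pinv A * A))\<^sup>2 / (spec_norm (pinv B))\<^sup>2))"
  defines "\<epsilon>2 \<equiv> (spec_norm (pinv A))\<^sup>2 * (spec_norm (pinv B))\<^sup>2 *
      ((fro_norm E)\<^sup>2 - max ((fro_norm (A * pinv A * E * pinv B))\<^sup>2 / (spec_norm (pinv B))\<^sup>2)
                            ((fro_norm (pinv A * E * pinv B * B))\<^sup>2 / (spec_norm (pinv A))\<^sup>2))"
  shows "(fro_norm (pinv B - pinv A))\<^sup>2 \<le>
           min (\<delta>1 + (fro_norm (pinv B * E * pinv A))\<^sup>2) (\<delta>2 + (fro_norm (pinv A * E * pinv B))\<^sup>2)
         \<and> (s = r \<longrightarrow> (fro_norm (pinv B - pinv A))\<^sup>2 \<le>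
           min (\<epsilon>1 + (fro_norm (pinv B * E * pinv A))\<^sup>2) (\<epsilon>2 + (fro_norm (pinv A * E * pinv B))\<^sup>2))"
proof -
  have swap: "A - B = - E" "pinv A - pinv B = - (pinv B - pinv A)"
    unfolding E_def using A B by (auto intro: minus_mat_swap)
  have "(fro_norm (pinv B - pinv A))\<^sup>2 \<le> \<delta>1 + (fro_norm (pinv B * E * pinv A))\<^sup>2"
    unfolding \<delta>1_def E_def by (rule pinv_diff_bound[OF A B])
  moreover have "(fro_norm (pinv B - pinv A))\<^sup>2 \<le> \<delta>2 + (fro_norm (pinv A * E * pinv B))\<^sup>2"
    using pinv_diff_bound[OF B A] A B unfolding \<delta>2_def swap E_def by (simp add: max.commute)
  moreover have "(fro_norm (pinv B - pinv A))\<^sup>2 \<le> \<epsilon>1 + (fro_norm (pinv B * E * pinv A))\<^sup>2"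
    and "(fro_norm (pinv B - pinv A))\<^sup>2 \<le> \<epsilon>2 + (fro_norm (pinv A * E * pinv B))\<^sup>2"
    if "s = r"
  proof -
    have rank: "crank A = crank B"
      using that rA rB by simp
    show "(fro_norm (pinv B - pinv A))\<^sup>2 \<le> \<epsilon>1 + (fro_norm (pinv B * E * pinv A))\<^sup>2"
      unfolding \<epsilon>1_def E_def by (rule pinv_diff_bound_eq_rank[OF A B rank])
    show "(fro_norm (pinv B - pinv A))\<^sup>2 \<le> \<epsilon>2 + (fro_norm (pinv A * E * pinv B))\<^sup>2"
      using pinv_diff_bound_eq_rank[OF B A rank[symmetric]] A B
      unfolding \<epsilon>2_def swap E_def by (simp add: mult.commute)
  qed
  ultimately show ?thesis
    by simp
qed

end
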